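(* Let $G$ be an infinite group acting on a set $X$ on the left, and let $\mathfrak{F}$ be a family of subsets of $X$ that is $G$-invariant and upward directed. Then $\mathfrak{F}$ is $\mathfrak{F}$-packing large if and only if, for every $A\in\mathfrak{F}$, the set $\Delta_{\mathfrak{F}}(A)=\{g\in G: gA\cap A\in\mathfrak{F}\}$ is a Ramsey $(-1,1)$-product subset of $G$.
   Context: $\mathfrak{F}$ is $G$-invariant if $A\in\mathfrak{F}$, $g\in G$ imply $gA\in\mathfrak{F}$; upward directed if $A\in\mathfrak{F}$, $A\subseteq C\subseteq X$ imply $C\in\mathfrak{F}$. (Under these assumptions $\{g: gB\subseteq A$ for some $B\in\mathfrak{F}, B\subseteq A\}=\{g: gA\cap A\in\mathfrak{F}\}$.) A family $\mathfrak{F}'$ of subsets of $X$ is $\mathfrak{F}$-disjoint if $A\cap B\notin\mathfrak{F}$ for all distinct $A,B\in\mathfrak{F}'$. A family $\mathfrak{F}'$ is $\mathfrak{F}$-packing large if for each $A\in\mathfrak{F}'$ every $\mathfrak{F}$-disjoint family of sets of the form $gA$, $g\in G$, is finite. A subset $R\subseteq G$ is a Ramsey $(-1,1)$-product subset if every infinite $Y\subseteq G$ contains distinct $y_1,y_2$ with $y_1^{-1}y_2\in R$ and $y_2^{-1}y_1\in R$. *)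

theory Defs
  imports "HOL-Algebra.Group_Action"
begin

definition G_invariant :: "('g, 'm) monoid_scheme \<Rightarrow> ('g \<Rightarrow> 'b \<Rightarrow> 'b) \<Rightarrow> 'b set set \<Rightarrow> bool" where
  "G_invariant G \<phi> F \<longleftrightarrow> (\<forall>A\<in>F. \<forall>g\<in>carrier G. \<phi> g ` A \<in> F)"

definition upward_directed :: "'b set \<Rightarrow> 'b set set \<Rightarrow> bool" where
  "upward_directed X F \<longleftrightarrow> (\<forall>A\<in>F. \<forall>C. A \<subseteq> C \<and> C \<subseteq> X \<longrightarrow> C \<in> F)"

definition F_disjoint :: "'b set set \<Rightarrow> 'b set set \<Rightarrow> bool" where
  "F_disjoint F F' \<longleftrightarrow> (\<forall>A\<in>F'. \<forall>B\<in>F'. A \<noteq> B \<longrightarrow> A \<inter> B \<notin> F)"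

definition F_packing_large ::
  "('g, 'm) monoid_scheme \<Rightarrow> ('g \<Rightarrow> 'b \<Rightarrow> 'b) \<Rightarrow> 'b set set \<Rightarrow> 'b set set \<Rightarrow> bool" where
  "F_packing_large G \<phi> F F' \<longleftrightarrow>
     (\<forall>A\<in>F'. \<forall>S. S \<subseteq> {\<phi> g ` A | g. g \<in> carrier G} \<and> F_disjoint F S \<longrightarrow> finite S)"

definition Delta_F ::
  "('g, 'm) monoid_scheme \<Rightarrow> ('g \<Rightarrow> 'b \<Rightarrow> 'b) \<Rightarrow> 'b set set \<Rightarrow> 'b set \<Rightarrow> 'g set" where
  "Delta_F G \<phi> F A = {g \<in> carrier G. \<phi> g ` A \<inter> A \<in> F}"

definition ramsey_m1_1_product :: "('g, 'm) monoid_scheme \<Rightarrow> 'g set \<Rightarrow> bool" where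
  "ramsey_m1_1_product G R \<longleftrightarrow>
     (\<forall>Y. Y \<subseteq> carrier G \<and> infinite Y \<longrightarrow>
        (\<exists>y1\<in>Y. \<exists>y2\<in>Y. y1 \<noteq> y2 \<and>
           inv\<^bsub>G\<^esub> y1 \<otimes>\<^bsub>G\<^esub> y2 \<in> R \<and> inv\<^bsub>G\<^esub> y2 \<otimes>\<^bsub>G\<^esub> y1 \<in> R))"

end

theory Submission
  imports Defs
begin

text \<open>
  For \<open>g, h \<in> G\<close> the translate of \<open>g\<^sup>-\<^sup>1h A \<inter> A\<close> by \<open>g\<close> is \<open>hA \<inter> gA\<close>, so by \<open>G\<close>-invariance
  \<open>g\<^sup>-\<^sup>1h \<in> \<Delta>(A)\<close> exactly when the translates \<open>gA\<close> and \<open>hA\<close> meet in a set of \<open>F\<close>.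
  Hence \<open>\<Delta>(A)\<close> is a Ramsey \<open>(-1,1)\<close>-product set iff every infinite set of group elements
  contains two elements whose translates of \<open>A\<close> are not \<open>F\<close>-disjoint. This is the same as
  every infinite family of translates of \<open>A\<close> failing to be \<open>F\<close>-disjoint, because two distinct
  elements with equal translates already give the intersection \<open>gA \<in> F\<close>.
\<close>

lemma F_disjoint_image_finite_iff:
  assumes "\<And>y. y \<in> D \<Longrightarrow> T y \<in> F"
  shows "(\<forall>S \<subseteq> T ` D. F_disjoint F S \<longrightarrow> finite S) \<longleftrightarrow>
    (\<forall>Y \<subseteq> D. infinite Y \<longrightarrow> (\<exists>y1\<in>Y. \<exists>y2\<in>Y. y1 \<noteq> y2 \<and> T y1 \<inter> T y2 \<in> F))"
proof (intro iffI allI impI)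
  fix Y assume packing: "\<forall>S \<subseteq> T ` D. F_disjoint F S \<longrightarrow> finite S"
    and Y: "Y \<subseteq> D" "infinite Y"
  show "\<exists>y1\<in>Y. \<exists>y2\<in>Y. y1 \<noteq> y2 \<and> T y1 \<inter> T y2 \<in> F"
  proof (rule ccontr)
    assume "\<not> ?thesis"
    then have disjoint: "T y1 \<inter> T y2 \<notin> F" if "y1 \<in> Y" "y2 \<in> Y" "y1 \<noteq> y2" for y1 y2
      using that by blast
    have "inj_on T Y"
      using disjoint assms Y(1) by (intro inj_onI) (metis Int_absorb subsetD)
    then have "infinite (T ` Y)"
      using Y(2) finite_imageD by blast
    moreover have "F_disjoint F (T ` Y)"
      unfolding F_disjoint_def using disjoint by blast
    moreover have "T ` Y \<subseteq> T ` D"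
      using Y(1) by blast
    ultimately show False
      using packing by blast
  qed
next
  fix S assume ramsey: "\<forall>Y \<subseteq> D. infinite Y \<longrightarrow> (\<exists>y1\<in>Y. \<exists>y2\<in>Y. y1 \<noteq> y2 \<and> T y1 \<inter> T y2 \<in> F)"
    and S: "S \<subseteq> T ` D" "F_disjoint F S"
  show "finite S"
  proof (rule ccontr)
    assume "infinite S"
    have "inj_on (inv_into D T) S"
      using S(1) by (rule inj_on_inv_into)
    then have "infinite (inv_into D T ` S)"
      using \<open>infinite S\<close> finite_imageD by blast
    moreover have "inv_into D T ` S \<subseteq> D"
      using S(1) by (auto intro: inv_into_into)
    ultimately obtain s1 s2 where "s1 \<in> S" "s2 \<in> S"
      "inv_into D T s1 \<noteq> inv_into D T s2"
      "T (inv_into D T s1) \<inter> T (inv_into D T s2) \<in> F"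
      using ramsey by blast
    moreover have "T (inv_into D T s) = s" if "s \<in> S" for s
      using S(1) that by (meson f_inv_into_f subsetD)
    ultimately have "s1 \<noteq> s2" "s1 \<inter> s2 \<in> F"
      by metis+
    then show False
      using S(2) \<open>s1 \<in> S\<close> \<open>s2 \<in> S\<close> unfolding F_disjoint_def by blast
  qed
qed

sublocale group_action \<subseteq> group G
  by (rule group_hom.axioms(1)[OF group_hom])

context group_action
begin

lemma image_closed:
  assumes "B \<subseteq> E" "g \<in> carrier G"
  shows "\<phi> g ` B \<subseteq> E"
  using surj_prop[OF assms(2)] assms(1) by blast

lemma image_mult:
  assumes "B \<subseteq> E" "g \<in> carrier G" "h \<in> carrier G"
  shows "\<phi> (g \<otimes> h) ` B = \<phi> g ` \<phi> h ` B"
  using assms composition_rule by (force simp: image_image)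

lemma image_one:
  assumes "B \<subseteq> E"
  shows "\<phi> \<one> ` B = B"
  using assms id_eq_one[symmetric] by force

lemma image_inv_image:
  assumes "B \<subseteq> E" "g \<in> carrier G"
  shows "\<phi> (inv g) ` \<phi> g ` B = B"
  using image_mult[OF assms(1) inv_closed[OF assms(2)] assms(2)] image_one[OF assms(1)] assms(2)
  by simp

lemma image_Int:
  assumes "A \<subseteq> E" "B \<subseteq> E" "g \<in> carrier G"
  shows "\<phi> g ` (A \<inter> B) = \<phi> g ` A \<inter> \<phi> g ` B"
  using inj_prop[OF assms(3)] assms by (simp add: inj_on_image_Int)

lemma G_invariant_image_iff:
  assumes "G_invariant G \<phi> F" "B \<subseteq> E" "g \<in> carrier G"
  shows "\<phi> g ` B \<in> F \<longleftrightarrow> B \<in> F"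
  using assms image_inv_image[OF assms(2,3)] inv_closed[OF assms(3)]
  unfolding G_invariant_def by metis

lemma inv_mult_in_Delta_F_iff:
  assumes "G_invariant G \<phi> F" "A \<subseteq> E" "g \<in> carrier G" "h \<in> carrier G"
  shows "inv g \<otimes> h \<in> Delta_F G \<phi> F A \<longleftrightarrow> \<phi> g ` A \<inter> \<phi> h ` A \<in> F"
proof -
  have gh: "inv g \<otimes> h \<in> carrier G"
    using assms(3,4) by simp
  have "inv g \<otimes> h \<in> Delta_F G \<phi> F A \<longleftrightarrow> \<phi> (inv g \<otimes> h) ` A \<inter> A \<in> F"
    unfolding Delta_F_def using gh by simp
  also have "\<dots> \<longleftrightarrow> \<phi> g ` (\<phi> (inv g \<otimes> h) ` A \<inter> A) \<in> F"
    using G_invariant_image_iff[OF assms(1) _ assms(3)] assms(2) by blast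
  also have "\<phi> g ` (\<phi> (inv g \<otimes> h) ` A \<inter> A) = \<phi> g ` A \<inter> \<phi> h ` A"
    using assms(2-4) gh
    by (auto simp: image_Int image_closed image_mult[symmetric] m_assoc[symmetric])
  finally show ?thesis .
qed

lemma ramsey_Delta_F_iff:
  assumes "G_invariant G \<phi> F" "A \<subseteq> E"
  shows "ramsey_m1_1_product G (Delta_F G \<phi> F A) \<longleftrightarrow>
    (\<forall>Y \<subseteq> carrier G. infinite Y \<longrightarrow>
      (\<exists>y1\<in>Y. \<exists>y2\<in>Y. y1 \<noteq> y2 \<and> \<phi> y1 ` A \<inter> \<phi> y2 ` A \<in> F))"
proof -
  have "inv y1 \<otimes> y2 \<in> Delta_F G \<phi> F A \<and> inv y2 \<otimes> y1 \<in> Delta_F G \<phi> F A \<longleftrightarrow>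
      \<phi> y1 ` A \<inter> \<phi> y2 ` A \<in> F" if "y1 \<in> carrier G" "y2 \<in> carrier G" for y1 y2
    using inv_mult_in_Delta_F_iff[OF assms that] inv_mult_in_Delta_F_iff[OF assms that(2,1)]
    by (simp add: Int_commute)
  then show ?thesis
    unfolding ramsey_m1_1_product_def by (smt (verit) subsetD)
qed

lemma packing_large_singleton_iff_ramsey_Delta_F:
  assumes "G_invariant G \<phi> F" "F \<subseteq> Pow E" "A \<in> F"
  shows "F_packing_large G \<phi> F {A} \<longleftrightarrow> ramsey_m1_1_product G (Delta_F G \<phi> F A)"
proof -
  have "F_packing_large G \<phi> F {A} \<longleftrightarrow>
      (\<forall>S \<subseteq> (\<lambda>g. \<phi> g ` A) ` carrier G. F_disjoint F S \<longrightarrow> finite S)"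
    unfolding F_packing_large_def by (auto simp: setcompr_eq_image)
  also have "\<dots> \<longleftrightarrow> (\<forall>Y \<subseteq> carrier G. infinite Y \<longrightarrow>
      (\<exists>y1\<in>Y. \<exists>y2\<in>Y. y1 \<noteq> y2 \<and> \<phi> y1 ` A \<inter> \<phi> y2 ` A \<in> F))"
    using assms(1,3) unfolding G_invariant_def by (intro F_disjoint_image_finite_iff) blast
  also have "\<dots> \<longleftrightarrow> ramsey_m1_1_product G (Delta_F G \<phi> F A)"
    using ramsey_Delta_F_iff[OF assms(1)] assms(2,3) by blast
  finally show ?thesis .
qed

end

theorem proposition5p6:
  fixes G (structure) and X :: "'b set" and \<phi> :: "'g \<Rightarrow> 'b \<Rightarrow> 'b" and F :: "'b set set"
  assumes "group_action G X \<phi>"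
    and "infinite (carrier G)"
    and "F \<subseteq> Pow X"
    and "G_invariant G \<phi> F"
    and "upward_directed X F"
  shows "F_packing_large G \<phi> F F \<longleftrightarrow> (\<forall>A\<in>F. ramsey_m1_1_product G (Delta_F G \<phi> F A))"
proof -
  have "F_packing_large G \<phi> F F \<longleftrightarrow> (\<forall>A\<in>F. F_packing_large G \<phi> F {A})"
    unfolding F_packing_large_def by blast
  also have "\<dots> \<longleftrightarrow> (\<forall>A\<in>F. ramsey_m1_1_product G (Delta_F G \<phi> F A))"
    using group_action.packing_large_singleton_iff_ramsey_Delta_F[OF assms(1,4,3)]
    by (intro ball_cong) simp_all
  finally show ?thesis .
qed

end
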